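(* Let $R$ be a ring. Then $R$ is a GSWNC ring if and only if for every non-invertible $a \in R$, at least one of $a - a^2$ and $a + a^2$ is nilpotent.
   Context: All rings are associative with identity. An element $a$ of a ring is strongly weakly nil-clean if there exist an idempotent $e$ and a nilpotent $q$ with $eq = qe$ such that $a = q + e$ or $a = q - e$. A ring is GSWNC if every non-invertible element is strongly weakly nil-clean. *)

theory Defs
  imports Main
begin

text \<open>Rings: associative with identity, not necessarily commutative; the zero ring
is allowed (class ring + monoid_mult, no 0 \<noteq> 1 requirement).\<close>

definition invertible :: "'a::{ring, monoid_mult} \<Rightarrow> bool" where
  "invertible a \<longleftrightarrow> (\<exists>b. a * b = 1 \<and> b * a = 1)"

definition nilpotent :: "'a::{ring, monoid_mult} \<Rightarrow> bool" where
  "nilpotent q \<longleftrightarrow> (\<exists>n::nat. q ^ n = 0)"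

definition idempotent :: "'a::{ring, monoid_mult} \<Rightarrow> bool" where
  "idempotent e \<longleftrightarrow> e * e = e"

definition strongly_weakly_nil_clean :: "'a::{ring, monoid_mult} \<Rightarrow> bool" where
  "strongly_weakly_nil_clean a \<longleftrightarrow>
     (\<exists>e q. idempotent e \<and> nilpotent q \<and> e * q = q * e \<and> (a = q + e \<or> a = q - e))"

definition GSWNC :: "'a::{ring, monoid_mult} itself \<Rightarrow> bool" where
  "GSWNC (_ :: 'a itself) \<longleftrightarrow>
     (\<forall>a::'a. \<not> invertible a \<longrightarrow> strongly_weakly_nil_clean a)"

end

theory Submission
  imports Defs
begin

text \<open>If \<open>a = q + e\<close> with \<open>e\<close> idempotent, \<open>q\<close> nilpotent and \<open>eq = qe\<close>, then
  \<open>a - a\<^sup>2 = q (1 - q - 2e)\<close> is nilpotent; for \<open>a = q - e\<close> the same holds for \<open>a + a\<^sup>2\<close>.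
  Conversely, if \<open>t = a - a\<^sup>2\<close> is nilpotent, the iteration \<open>x \<mapsto> 3x\<^sup>2 - 2x\<^sup>3\<close> started
  at \<open>a\<close> squares the defect \<open>x - x\<^sup>2\<close> up to a factor while moving \<open>x\<close> only by
  multiples of \<open>t\<close>; after finitely many steps it reaches an idempotent \<open>e\<close> with \<open>a - e\<close>
  nilpotent. All elements involved lie in the bicommutant of \<open>a\<close>, which is a commutative
  subring, so these commute. The case \<open>a + a\<^sup>2\<close> nilpotent reduces to the first one via \<open>-a\<close>.\<close>

lemma power_mult_commuting:
  fixes x y :: "'a::monoid_mult"
  assumes "x * y = y * x"
  shows "(x * y) ^ n = x ^ n * y ^ n"
proof (induction n)
  case 0
  then show ?case by simp
next
  case (Suc n)
  have "y * x ^ n = x ^ n * y"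
    using power_commuting_commutes[OF assms] by simp
  then have "x * y * (x ^ n * y ^ n) = x * x ^ n * (y * y ^ n)"
    by (metis mult.assoc)
  then show ?case
    using Suc by simp
qed

lemma nilpotent_mult_commuting:
  fixes q y :: "'a::{ring,monoid_mult}"
  assumes "nilpotent q" and "q * y = y * q"
  shows "nilpotent (q * y)"
proof -
  obtain n where "q ^ n = 0"
    using assms(1) unfolding nilpotent_def by blast
  then have "(q * y) ^ n = 0"
    using power_mult_commuting[OF assms(2)] by simp
  then show ?thesis
    unfolding nilpotent_def by blast
qed

lemma nilpotent_uminus_iff:
  fixes q :: "'a::{ring,monoid_mult}"
  shows "nilpotent (- q) \<longleftrightarrow> nilpotent q"
proof -
  have "nilpotent (- q)" if "nilpotent q" for q :: 'a
    using nilpotent_mult_commuting[OF that, of "- 1"] by simp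
  from this[of q] this[of "- q"] show ?thesis
    by auto
qed

definition bicommutant :: "'a::{ring,monoid_mult} \<Rightarrow> 'a set" where
  "bicommutant a = {x. \<forall>y. y * a = a * y \<longrightarrow> x * y = y * x}"

lemma bicommutant_self: "a \<in> bicommutant a"
  unfolding bicommutant_def by auto

lemma bicommutant_one: "1 \<in> bicommutant a"
  unfolding bicommutant_def by auto

lemma bicommutant_add: "x \<in> bicommutant a \<Longrightarrow> y \<in> bicommutant a \<Longrightarrow> x + y \<in> bicommutant a"
  unfolding bicommutant_def by (auto simp: algebra_simps)

lemma bicommutant_diff: "x \<in> bicommutant a \<Longrightarrow> y \<in> bicommutant a \<Longrightarrow> x - y \<in> bicommutant a"
  unfolding bicommutant_def by (auto simp: algebra_simps)

lemma bicommutant_mult: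
  assumes "x \<in> bicommutant a" and "y \<in> bicommutant a"
  shows "x * y \<in> bicommutant a"
  unfolding bicommutant_def
proof (intro CollectI allI impI)
  fix z
  assume "z * a = a * z"
  then have "x * z = z * x" and "y * z = z * y"
    using assms unfolding bicommutant_def by auto
  then show "x * y * z = z * (x * y)"
    by (simp add: mult.assoc flip: mult.assoc[of x z])
qed

lemma bicommutant_power: "x \<in> bicommutant a \<Longrightarrow> x ^ n \<in> bicommutant a"
  by (induction n) (auto intro: bicommutant_one bicommutant_mult)

lemmas bicommutant_closed =
  bicommutant_self bicommutant_one bicommutant_add bicommutant_diff bicommutant_mult
  bicommutant_power

lemma bicommutant_commute:
  assumes "x \<in> bicommutant a" and "y \<in> bicommutant a"
  shows "x * y = y * x"
proof -
  have "y * a = a * y"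
    using assms(2) bicommutant_self unfolding bicommutant_def by blast
  then show ?thesis
    using assms(1) unfolding bicommutant_def by blast
qed

text \<open>The classical lifting map \<open>x \<mapsto> 3x\<^sup>2 - 2x\<^sup>3\<close>, written without numerals, which the
  sort \<open>{ring, monoid_mult}\<close> lacks.\<close>

definition idempotent_step :: "'a::{ring,monoid_mult} \<Rightarrow> 'a" where
  "idempotent_step x = x ^ 2 * (1 + (1 - x) + (1 - x))"

lemma idempotent_step_defect:
  "idempotent_step x - (idempotent_step x) ^ 2 =
    (x - x ^ 2) ^ 2 * (1 + 1 + 1 + (x - x ^ 2) + (x - x ^ 2) + (x - x ^ 2) + (x - x ^ 2))"
  unfolding idempotent_step_def by (simp add: power2_eq_square algebra_simps)

lemma idempotent_step_diff: "idempotent_step x - x = (x - x ^ 2) * (x + x - 1)"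
  unfolding idempotent_step_def by (simp add: power2_eq_square algebra_simps)

lemma idempotent_step_bicommutant:
  "x \<in> bicommutant a \<Longrightarrow> idempotent_step x \<in> bicommutant a"
  unfolding idempotent_step_def by (intro bicommutant_closed)

lemma idempotent_step_defect_power:
  assumes x: "x \<in> bicommutant a" and t: "t \<in> bicommutant a" and c: "c \<in> bicommutant a"
    and defect: "x - x ^ 2 = t ^ m * c"
  shows "\<exists>c'\<in>bicommutant a. idempotent_step x - (idempotent_step x) ^ 2 = t ^ (2 * m) * c'"
proof
  define s where "s = 1 + 1 + 1 + (x - x ^ 2) + (x - x ^ 2) + (x - x ^ 2) + (x - x ^ 2)"
  have "idempotent_step x - (idempotent_step x) ^ 2 = (t ^ m * c) ^ 2 * s"
    unfolding idempotent_step_defect s_def defect ..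
  also have "\<dots> = (t ^ m) ^ 2 * c ^ 2 * s"
    using bicommutant_commute[OF bicommutant_power[OF t] c]
    by (subst power_mult_commuting) simp_all
  also have "\<dots> = t ^ (2 * m) * (c ^ 2 * s)"
    by (simp only: mult.commute[of 2 m] power_mult mult.assoc)
  finally show "idempotent_step x - (idempotent_step x) ^ 2 = t ^ (2 * m) * (c ^ 2 * s)" .
  show "c ^ 2 * s \<in> bicommutant a"
    unfolding s_def using c x by (intro bicommutant_closed)
qed

lemma idempotent_step_shift:
  assumes x: "x \<in> bicommutant a" and t: "t \<in> bicommutant a" and c: "c \<in> bicommutant a"
    and defect: "x - x ^ 2 = t ^ m * c" and "m > 0"
  shows "\<exists>c'\<in>bicommutant a. idempotent_step x - x = t * c'"
proof
  have "idempotent_step x - x = t ^ m * c * (x + x - 1)"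
    unfolding idempotent_step_diff defect ..
  also have "\<dots> = t * (t ^ (m - 1) * c * (x + x - 1))"
    using \<open>m > 0\<close> power_Suc[of t "m - 1"] by (simp add: mult.assoc)
  finally show "idempotent_step x - x = t * (t ^ (m - 1) * c * (x + x - 1))" .
  show "t ^ (m - 1) * c * (x + x - 1) \<in> bicommutant a"
    using c t x by (intro bicommutant_closed)
qed

lemma idempotent_step_iterate:
  fixes a :: "'a::{ring,monoid_mult}"
  defines "t \<equiv> a - a ^ 2"
  shows "(idempotent_step ^^ k) a \<in> bicommutant a"
    and "\<exists>c\<in>bicommutant a. (idempotent_step ^^ k) a - ((idempotent_step ^^ k) a) ^ 2 = t ^ 2 ^ k * c"
    and "\<exists>d\<in>bicommutant a. (idempotent_step ^^ k) a - a = t * d"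
proof (induction k)
  case 0
  show "(idempotent_step ^^ 0) a \<in> bicommutant a"
    by (simp add: bicommutant_self)
  show "\<exists>c\<in>bicommutant a. (idempotent_step ^^ 0) a - ((idempotent_step ^^ 0) a) ^ 2 = t ^ 2 ^ 0 * c"
    using bicommutant_one by (intro bexI[of _ 1]) (simp_all add: t_def)
  show "\<exists>d\<in>bicommutant a. (idempotent_step ^^ 0) a - a = t * d"
    by (intro bexI[of _ 0]) (simp_all add: bicommutant_def)
next
  case (Suc k)
  let ?x = "(idempotent_step ^^ k) a"
  have x: "?x \<in> bicommutant a" by (fact Suc.IH(1))
  have t: "t \<in> bicommutant a"
    unfolding t_def by (intro bicommutant_closed)
  obtain c where c: "c \<in> bicommutant a" and defect: "?x - ?x ^ 2 = t ^ 2 ^ k * c"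
    using Suc.IH(2) by blast
  obtain d where d: "d \<in> bicommutant a" and "?x - a = t * d"
    using Suc.IH(3) by blast
  obtain d' where d': "d' \<in> bicommutant a" and "idempotent_step ?x - ?x = t * d'"
    using idempotent_step_shift[OF x t c defect] by auto
  have "idempotent_step ?x - a = (idempotent_step ?x - ?x) + (?x - a)"
    by simp
  also have "\<dots> = t * (d' + d)"
    unfolding \<open>idempotent_step ?x - ?x = t * d'\<close> \<open>?x - a = t * d\<close> distrib_left ..
  finally show "\<exists>d\<in>bicommutant a. (idempotent_step ^^ Suc k) a - a = t * d"
    using d d' by (auto intro: bicommutant_add)
  show "(idempotent_step ^^ Suc k) a \<in> bicommutant a"
    using x by (simp add: idempotent_step_bicommutant)
  show "\<exists>c\<in>bicommutant a.
      (idempotent_step ^^ Suc k) a - ((idempotent_step ^^ Suc k) a) ^ 2 = t ^ 2 ^ Suc k * c"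
    using idempotent_step_defect_power[OF x t c defect] by simp
qed

lemma idempotent_lifting:
  fixes a :: "'a::{ring,monoid_mult}"
  assumes "nilpotent (a - a ^ 2)"
  obtains e where "idempotent e" and "e \<in> bicommutant a" and "nilpotent (a - e)"
proof -
  define t where "t = a - a ^ 2"
  obtain n where "t ^ n = 0"
    using assms unfolding nilpotent_def t_def by blast
  moreover have "t ^ 2 ^ n = t ^ n * t ^ (2 ^ n - n)"
    using less_exp[of n] by (simp flip: power_add)
  ultimately have "t ^ 2 ^ n = 0"
    by simp
  define e where "e = (idempotent_step ^^ n) a"
  have e: "e \<in> bicommutant a"
    unfolding e_def by (rule idempotent_step_iterate(1))
  have "e - e ^ 2 = 0"
    using idempotent_step_iterate(2)[of a n] \<open>t ^ 2 ^ n = 0\<close> unfolding e_def t_def by auto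
  then have "idempotent e"
    unfolding idempotent_def by (simp add: power2_eq_square)
  obtain d where d: "d \<in> bicommutant a" and "e - a = t * d"
    using idempotent_step_iterate(3)[of a n] unfolding e_def t_def by blast
  have "t \<in> bicommutant a"
    unfolding t_def by (intro bicommutant_closed)
  with d have "nilpotent (t * d)"
    using assms unfolding t_def by (intro nilpotent_mult_commuting bicommutant_commute)
  moreover have "a - e = - (t * d)"
    using \<open>e - a = t * d\<close> by (metis minus_diff_eq)
  ultimately show thesis
    using that \<open>idempotent e\<close> e by (simp add: nilpotent_uminus_iff)
qed

lemma strongly_weakly_nil_clean_if_nilpotent_diff_square:
  fixes a :: "'a::{ring,monoid_mult}"
  assumes "nilpotent (a - a ^ 2)"
  shows "strongly_weakly_nil_clean a"
proof -
  obtain e where "idempotent e" "e \<in> bicommutant a" "nilpotent (a - e)"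
    using idempotent_lifting[OF assms] .
  moreover have "e * (a - e) = (a - e) * e"
    using \<open>e \<in> bicommutant a\<close> bicommutant_self by (intro bicommutant_commute bicommutant_diff)
  ultimately show ?thesis
    unfolding strongly_weakly_nil_clean_def by (intro exI[of _ e] exI[of _ "a - e"]) simp
qed

lemma nilpotent_diff_square_if_nil_clean:
  fixes e q :: "'a::{ring,monoid_mult}"
  assumes "idempotent e" and "nilpotent q" and "e * q = q * e"
  shows "nilpotent ((q + e) - (q + e) ^ 2)"
proof -
  have "(q + e) - (q + e) ^ 2 = q * (1 - q - e - e)"
    using assms(1,3) unfolding idempotent_def power2_eq_square by (simp add: algebra_simps)
  moreover have "q * (1 - q - e - e) = (1 - q - e - e) * q"
    using assms(3) by (simp add: algebra_simps)
  ultimately show ?thesis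
    using nilpotent_mult_commuting[OF assms(2)] by simp
qed

lemma strongly_weakly_nil_clean_uminus:
  fixes a :: "'a::{ring,monoid_mult}"
  shows "strongly_weakly_nil_clean (- a) \<longleftrightarrow> strongly_weakly_nil_clean a"
proof -
  have "strongly_weakly_nil_clean (- a)" if swnc: "strongly_weakly_nil_clean a" for a :: 'a
  proof -
    obtain e q where "idempotent e" "nilpotent q" "e * q = q * e" "a = q + e \<or> a = q - e"
      using swnc unfolding strongly_weakly_nil_clean_def by blast
    moreover have "nilpotent (- q)" and "e * - q = - q * e"
      using \<open>nilpotent q\<close> \<open>e * q = q * e\<close> by (simp_all add: nilpotent_uminus_iff)
    ultimately show ?thesis
      unfolding strongly_weakly_nil_clean_def by (metis minus_add_distrib minus_diff_eq diff_conv_add_uminus add.commute)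
  qed
  from this[of a] this[of "- a"] show ?thesis
    by auto
qed

lemma strongly_weakly_nil_clean_iff:
  fixes a :: "'a::{ring,monoid_mult}"
  shows "strongly_weakly_nil_clean a \<longleftrightarrow> nilpotent (a - a ^ 2) \<or> nilpotent (a + a ^ 2)"
proof -
  have uminus: "nilpotent ((- a) - (- a) ^ 2) \<longleftrightarrow> nilpotent (a + a ^ 2)"
    by (simp add: power2_eq_square flip: nilpotent_uminus_iff[of "a + _"])
  show ?thesis
  proof
    assume "strongly_weakly_nil_clean a"
    then obtain e q where e: "idempotent e" and q: "nilpotent q" and "e * q = q * e"
      and "a = q + e \<or> - a = - q + e"
      unfolding strongly_weakly_nil_clean_def by force
    moreover have "nilpotent (- q)" and "e * - q = - q * e"
      using q \<open>e * q = q * e\<close> by (simp_all add: nilpotent_uminus_iff)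
    ultimately show "nilpotent (a - a ^ 2) \<or> nilpotent (a + a ^ 2)"
      using nilpotent_diff_square_if_nil_clean[OF e] uminus by metis
  next
    assume "nilpotent (a - a ^ 2) \<or> nilpotent (a + a ^ 2)"
    then show "strongly_weakly_nil_clean a"
      using strongly_weakly_nil_clean_if_nilpotent_diff_square[of "- a"] uminus
        strongly_weakly_nil_clean_if_nilpotent_diff_square[of a]
      by (auto simp: strongly_weakly_nil_clean_uminus)
  qed
qed

theorem proposition2p11:
  shows "GSWNC TYPE('a::{ring, monoid_mult}) \<longleftrightarrow>
    (\<forall>a::'a. \<not> invertible a \<longrightarrow> nilpotent (a - a ^ 2) \<or> nilpotent (a + a ^ 2))"
  unfolding GSWNC_def strongly_weakly_nil_clean_iff ..

end
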